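(* Assume Condition (T) (see context). Let $i\le d$ with $\alpha_i>\widetilde\alpha_i=\alpha_{j_0}$ for some $j_0$ with $i\vartriangleleft j_0$, and let $u_i=\lim_{s\to\infty}\mathbb E\,\pi_{ij_0}(s)^{\alpha_{j_0}}$ (this limit exists and lies in $(0,\infty)$). Then for every $j$ with $i\trianglelefteq j\vartriangleleft j_0$ there exists $\hat s_j$ such that $\mathbb E\,\pi_{ij}(s)^{\alpha_{j_0}}<u_i$ for all $s>\hat s_j$.
   Context: $(\mathbf A_t)_{t\in\mathbb Z}$ is an i.i.d. sequence of copies of a random $d\times d$ matrix $\mathbf A$, entries $A_{ij,t}$, jointly with random vectors $\mathbf B_t$ forming i.i.d. copies of $(\mathbf A,\mathbf B)$. Condition (T): (T-1) $\mathbf A\ge 0$, $\mathbf B\ge 0$ entrywise a.s.; (T-2) $\mathbb P(B_i=0)<1$; (T-3) $\mathbb P(A_{ij}=0)=1$ whenever $i>j$; (T-4) there exist $\alpha_1,\dots,\alpha_d>0$, pairwise distinct, with $\mathbb E A_{ii}^{\alpha_i}=1$; (T-5) $\mathbb E A_{ij}^{\alpha_i}<\infty$; (T-6) $\mathbb E B_i^{\alpha_i}<\infty$; (T-7) $\mathbb E[A_{ii}^{\alpha_i}\log^+A_{ii}]<\infty$; (T-8) the law of $\log A_{ii}$ given $\{A_{ii}>0\}$ is non-arithmetic. Relations: $i\preccurlyeq j$ if $\mathbb P(A_{ij}>0)>0$; $i\trianglelefteq j$ if there is a chain $i=i(0)\preccurlyeq\dots\preccurlyeq i(m)=j$ ($m\ge0$);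 $i\vartriangleleft j$ if $i\trianglelefteq j$, $i\ne j$; $\widetilde\alpha_i=\min\{\alpha_j:i\trianglelefteq j\}$. $\pi_{ij}(s)$ denotes the $(i,j)$ entry of $\mathbf A_0\mathbf A_{-1}\cdots\mathbf A_{-s+1}$. *)

theory Defs
  imports "HOL-Probability.Probability"
begin

text \<open>Random d x d matrices are functions nat => nat => real, indices in {1..d}.
  A t w i j is the (i,j) entry of A_t at outcome w; B t w i is the i-th entry of B_t.\<close>

definition MAB :: "nat \<Rightarrow> ((nat \<times> nat \<Rightarrow> real) \<times> (nat \<Rightarrow> real)) measure" where
  "MAB d = PiM ({1..d} \<times> {1..d}) (\<lambda>_. borel) \<Otimes>\<^sub>M PiM {1..d} (\<lambda>_. borel)"

definition obsAB ::
  "nat \<Rightarrow> (int \<Rightarrow> 'a \<Rightarrow> nat \<Rightarrow> nat \<Rightarrow> real) \<Rightarrow> (int \<Rightarrow> 'a \<Rightarrow> nat \<Rightarrow> real) \<Rightarrow> int \<Rightarrow> 'a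
     \<Rightarrow> (nat \<times> nat \<Rightarrow> real) \<times> (nat \<Rightarrow> real)" where
  "obsAB d A B t w = ((\<lambda>(i,j)\<in>{1..d} \<times> {1..d}. A t w i j), (\<lambda>i\<in>{1..d}. B t w i))"

text \<open>(A_t, B_t), t in Z, are i.i.d. copies of (A, B) = (A_0, B_0).\<close>
definition iid_AB :: "'a measure \<Rightarrow> nat \<Rightarrow> (int \<Rightarrow> 'a \<Rightarrow> nat \<Rightarrow> nat \<Rightarrow> real)
     \<Rightarrow> (int \<Rightarrow> 'a \<Rightarrow> nat \<Rightarrow> real) \<Rightarrow> bool" where
  "iid_AB M d A B \<longleftrightarrow>
     prob_space.indep_vars M (\<lambda>_. MAB d) (obsAB d A B) (UNIV :: int set) \<and>
     (\<forall>t. distr M (MAB d) (obsAB d A B t) = distr M (MAB d) (obsAB d A B 0))"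

text \<open>The law of a real random variable X conditioned on an event E is arithmetic if it is
  concentrated on c*Z for some c > 0; non-arithmetic otherwise.\<close>
definition non_arithmetic_given :: "'a measure \<Rightarrow> ('a \<Rightarrow> real) \<Rightarrow> ('a \<Rightarrow> bool) \<Rightarrow> bool" where
  "non_arithmetic_given M X E \<longleftrightarrow>
     (\<forall>c>0. measure M {w \<in> space M. E w \<and> (\<exists>k::int. X w = c * of_int k)}
              < measure M {w \<in> space M. E w})"

definition condition_T :: "'a measure \<Rightarrow> nat \<Rightarrow> (int \<Rightarrow> 'a \<Rightarrow> nat \<Rightarrow> nat \<Rightarrow> real)
     \<Rightarrow> (int \<Rightarrow> 'a \<Rightarrow> nat \<Rightarrow> real) \<Rightarrow> (nat \<Rightarrow> real) \<Rightarrow> bool" where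
  "condition_T M d A B \<alpha> \<longleftrightarrow>
     \<comment> \<open>(T-1)\<close>
     (AE w in M. (\<forall>i\<in>{1..d}. \<forall>j\<in>{1..d}. A 0 w i j \<ge> 0) \<and> (\<forall>i\<in>{1..d}. B 0 w i \<ge> 0)) \<and>
     \<comment> \<open>(T-2)\<close>
     (\<forall>i\<in>{1..d}. measure M {w \<in> space M. B 0 w i = 0} < 1) \<and>
     \<comment> \<open>(T-3)\<close>
     (\<forall>i\<in>{1..d}. \<forall>j\<in>{1..d}. i > j \<longrightarrow> measure M {w \<in> space M. A 0 w i j = 0} = 1) \<and>
     \<comment> \<open>(T-4)\<close>
     (\<forall>i\<in>{1..d}. \<alpha> i > 0) \<and> inj_on \<alpha> {1..d} \<and>
     (\<forall>i\<in>{1..d}. integrable M (\<lambda>w. A 0 w i i powr \<alpha> i) \<and>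
                  integral\<^sup>L M (\<lambda>w. A 0 w i i powr \<alpha> i) = 1) \<and>
     \<comment> \<open>(T-5)\<close>
     (\<forall>i\<in>{1..d}. \<forall>j\<in>{1..d}. integrable M (\<lambda>w. A 0 w i j powr \<alpha> i)) \<and>
     \<comment> \<open>(T-6)\<close>
     (\<forall>i\<in>{1..d}. integrable M (\<lambda>w. B 0 w i powr \<alpha> i)) \<and>
     \<comment> \<open>(T-7)\<close>
     (\<forall>i\<in>{1..d}. integrable M (\<lambda>w. A 0 w i i powr \<alpha> i * max 0 (ln (A 0 w i i)))) \<and>
     \<comment> \<open>(T-8)\<close>
     (\<forall>i\<in>{1..d}. non_arithmetic_given M (\<lambda>w. ln (A 0 w i i)) (\<lambda>w. A 0 w i i > 0))"

definition prec :: "'a measure \<Rightarrow> nat \<Rightarrow> (int \<Rightarrow> 'a \<Rightarrow> nat \<Rightarrow> nat \<Rightarrow> real) \<Rightarrow> nat \<Rightarrow> nat \<Rightarrow> bool" where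
  "prec M d A i j \<longleftrightarrow> i \<in> {1..d} \<and> j \<in> {1..d} \<and> measure M {w \<in> space M. A 0 w i j > 0} > 0"

definition trle :: "'a measure \<Rightarrow> nat \<Rightarrow> (int \<Rightarrow> 'a \<Rightarrow> nat \<Rightarrow> nat \<Rightarrow> real) \<Rightarrow> nat \<Rightarrow> nat \<Rightarrow> bool" where
  "trle M d A i j \<longleftrightarrow> (prec M d A)\<^sup>*\<^sup>* i j"

definition trlt :: "'a measure \<Rightarrow> nat \<Rightarrow> (int \<Rightarrow> 'a \<Rightarrow> nat \<Rightarrow> nat \<Rightarrow> real) \<Rightarrow> nat \<Rightarrow> nat \<Rightarrow> bool" where
  "trlt M d A i j \<longleftrightarrow> trle M d A i j \<and> i \<noteq> j"

definition alpha_tilde :: "'a measure \<Rightarrow> nat \<Rightarrow> (int \<Rightarrow> 'a \<Rightarrow> nat \<Rightarrow> nat \<Rightarrow> real)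
     \<Rightarrow> (nat \<Rightarrow> real) \<Rightarrow> nat \<Rightarrow> real" where
  "alpha_tilde M d A \<alpha> i = Min (\<alpha> ` {j \<in> {1..d}. trle M d A i j})"

text \<open>piM d A s w = A_0 A_{-1} ... A_{-s+1} (identity for s = 0), d x d matrix product.\<close>
fun piM :: "nat \<Rightarrow> (int \<Rightarrow> 'a \<Rightarrow> nat \<Rightarrow> nat \<Rightarrow> real) \<Rightarrow> nat \<Rightarrow> 'a \<Rightarrow> nat \<Rightarrow> nat \<Rightarrow> real" where
  "piM d A 0 w = (\<lambda>i j. if i = j then 1 else 0)"
| "piM d A (Suc s) w = (\<lambda>i j. \<Sum>k\<in>{1..d}. piM d A s w i k * A (- int s) w k j)"

end

theory Submission
  imports Defs
begin

(* Let a = \<alpha> j0 and N X = (E X^a)^(1 / max 1 a) for X \<ge> 0; N is subadditive.  As \<pi>(s) is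
   independent of A(-s), the recursion \<pi>(s+1) = \<pi>(s) A(-s) gives
   N \<pi>_ij(s+1) \<le> \<Sum>_k N \<pi>_ik(s) N A_kj, a triangular system by (T-3).  For i \<unlhd> k \<unlhd> j0 with
   k \<noteq> j0 we have \<alpha> k > a, so strict concavity, E A_kk^(\<alpha> k) = 1 and the non-degeneracy from
   (T-8) give N A_kk < 1; along the triangle the N \<pi>_ik(s) then decay geometrically.  For j0
   itself N A_j0j0 = 1, so E \<pi>_ij0(s)^a is non-decreasing, bounded because the forcing terms are
   summable, and eventually positive because i \<unlhd> j0; its limit u is therefore positive. *)

lemma powr_add_le_add_powr:
  fixes x y a :: real
  assumes "0 \<le> x" "0 \<le> y" "0 < a" "a \<le> 1"
  shows "(x + y) powr a \<le> x powr a + y powr a"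
proof (cases "x + y = 0")
  case True
  then show ?thesis using assms by simp
next
  case False
  then have s: "0 < x + y" using assms by simp
  have le_powr: "t \<le> t powr a" if "0 \<le> t" "t \<le> 1" for t :: real
    using that assms by (metis powr_mono' powr_one)
  have "1 = x / (x + y) + y / (x + y)"
    using s by (simp add: add_divide_distrib[symmetric])
  also have "\<dots> \<le> (x / (x + y)) powr a + (y / (x + y)) powr a"
    using assms s by (intro add_mono le_powr) auto
  also have "\<dots> = (x powr a + y powr a) / (x + y) powr a"
    using assms s by (simp add: powr_divide add_divide_distrib)
  finally show ?thesis using s by (simp add: divide_simps)
qed

lemma powr_add_le_weighted:
  fixes u v a l :: real
  assumes "1 \<le> a" "0 \<le> u" "0 \<le> v" "0 < l" "l < 1"
  shows "(u + v) powr a \<le> l powr (1 - a) * u powr a + (1 - l) powr (1 - a) * v powr a"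
proof -
  have l_ge: "1 \<le> l powr (1 - a)" and l'_ge: "1 \<le> (1 - l) powr (1 - a)"
    using assms by (smt (verit) powr01_less_one)+
  consider "u = 0" | "v = 0" | "0 < u" "0 < v" using assms by linarith
  then show ?thesis
  proof cases
    case 1
    then show ?thesis using l'_ge by (simp add: mult_le_cancel_right1)
  next
    case 2
    then show ?thesis using l_ge by (simp add: mult_le_cancel_right1)
  next
    case 3
    have convex: "convex_on {0<..} (\<lambda>x::real. x powr a)"
      by (rule powr_convex) (use assms in auto)
    have "(l * (u / l) + (1 - l) * (v / (1 - l))) powr a
        \<le> l * (u / l) powr a + (1 - l) * (v / (1 - l)) powr a"
      using convex_onD[OF convex, of "1 - l" "u / l" "v / (1 - l)"] 3 assms by (simp add: algebra_simps)
    moreover have "l * (u / l) + (1 - l) * (v / (1 - l)) = u + v" using assms by simp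
    moreover have "t * (w / t) powr a = t powr (1 - a) * w powr a" if "0 < t" "0 < w" for t w :: real
      using that by (simp add: powr_divide powr_diff)
    ultimately show ?thesis using 3 assms by simp
  qed
qed

lemma powr_add_weighted_eq:
  fixes x y a :: real
  assumes "0 < x" "0 < y"
  shows "(x / (x + y)) powr (1 - a) * x powr a + (y / (x + y)) powr (1 - a) * y powr a = (x + y) powr a"
proof -
  have weighted: "(t / (x + y)) powr (1 - a) * t powr a = t * (x + y) powr a / (x + y)" if "0 < t" for t
  proof -
    have "(t / (x + y)) powr (1 - a) * t powr a = (t powr (1 - a) * t powr a) / (x + y) powr (1 - a)"
      using that assms by (simp add: powr_divide)
    also have "\<dots> = t * (x + y) powr a / (x + y)"
      using that assms by (simp add: powr_add[symmetric] powr_diff)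
    finally show ?thesis .
  qed
  have "(x / (x + y)) powr (1 - a) * x powr a + (y / (x + y)) powr (1 - a) * y powr a
      = (x * (x + y) powr a + y * (x + y) powr a) / (x + y)"
    using assms by (simp add: weighted add_divide_distrib)
  then show ?thesis using assms by (simp add: distrib_right[symmetric])
qed

lemma powr_add_le_two_powr:
  fixes x y a :: real
  assumes "0 \<le> x" "0 \<le> y" "0 < a"
  shows "(x + y) powr a \<le> 2 powr a * (x powr a + y powr a)"
proof -
  have "(x + y) powr a \<le> (2 * max x y) powr a" using assms by (intro powr_mono2) auto
  also have "\<dots> = 2 powr a * max x y powr a" using assms by (simp add: powr_mult)
  also have "max x y powr a \<le> x powr a + y powr a" by (simp add: max_def)
  finally show ?thesis by simp
qed

lemma powr_le_one_plus_powr: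
  fixes x b c :: real
  assumes "0 \<le> b" "b \<le> c"
  shows "x powr b \<le> 1 + x powr c"
proof (cases "x = 0 \<or> ln x \<le> 0")
  case True
  then have "x powr b \<le> 1" using assms by (auto simp: powr_def mult_nonneg_nonpos)
  then show ?thesis by (smt (verit) powr_ge_zero)
next
  case False
  then have "b * ln x \<le> c * ln x" using assms by (intro mult_right_mono) auto
  then show ?thesis using False by (simp add: powr_def add_increasing)
qed

lemma powr_less_tangent:
  fixes y q :: real
  assumes "0 < q" "q < 1" "0 \<le> y" "y \<noteq> 1"
  shows "y powr q < q * y + (1 - q)"
proof -
  have deriv: "DERIV (\<lambda>z. z powr q) x :> q * x powr (q - 1)" if "0 < x" for x
    using has_real_derivative_powr[OF that] .
  consider "y = 0" | "0 < y" "y < 1" | "1 < y" using assms by linarith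
  then show ?thesis
  proof cases
    case 1
    then show ?thesis using assms by simp
  next
    case 2
    obtain z where z: "y < z" "z < 1" "1 powr q - y powr q = (1 - y) * (q * z powr (q - 1))"
      using MVT2[of y 1 "\<lambda>z. z powr q" "\<lambda>x. q * x powr (q - 1)"] deriv 2 by force
    have "1 < z powr (q - 1)"
      using z 2 assms by (metis less_iff_diff_less_0 powr_less_mono2_neg powr_one_eq_one order.strict_trans)
    then have "(1 - y) * q < (1 - y) * (q * z powr (q - 1))"
      using 2 assms by (simp add: mult_strict_left_mono)
    then show ?thesis using z by (simp add: algebra_simps)
  next
    case 3
    obtain z where z: "1 < z" "z < y" "y powr q - 1 powr q = (y - 1) * (q * z powr (q - 1))"
      using MVT2[of 1 y "\<lambda>z. z powr q" "\<lambda>x. q * x powr (q - 1)"] deriv 3 by force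
    have "z powr (q - 1) < 1" using z 3 assms by (simp add: powr_less_one)
    then have "(y - 1) * (q * z powr (q - 1)) < (y - 1) * q"
      using 3 assms by (simp add: mult_strict_left_mono)
    then show ?thesis using z by (simp add: algebra_simps)
  qed
qed

lemma powr_le_tangent:
  fixes y q :: real
  assumes "0 < q" "q < 1" "0 \<le> y"
  shows "y powr q \<le> q * y + (1 - q)"
  using powr_less_tangent[OF assms] by (cases "y = 1") auto

lemma geometric_bound_of_contracting_recursion:
  fixes x :: "nat \<Rightarrow> real"
  assumes step: "\<And>s. x (Suc s) \<le> g * x s + D * q ^ s"
    and "0 \<le> g" "g < 1" "0 \<le> q" "q < 1" "0 \<le> D"
  shows "\<exists>C r. 0 \<le> r \<and> r < 1 \<and> (\<forall>s. x s \<le> C * r ^ s)"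
proof -
  define m where "m = max g q"
  define r where "r = (1 + m) / 2"
  define C where "C = max (x 0) (D / (r - m))"
  have m: "0 \<le> m" "m < r" "r < 1" "g \<le> m" "q \<le> m"
    using assms unfolding r_def m_def by auto
  have "0 \<le> D / (r - m)" using m assms by simp
  then have "0 \<le> C" unfolding C_def by linarith
  moreover have "D / (r - m) \<le> C" unfolding C_def by simp
  ultimately have C: "0 \<le> C" "D \<le> C * (r - m)" using m by (auto simp: pos_divide_le_eq)
  have "x s \<le> C * r ^ s" for s
  proof (induction s)
    case 0
    then show ?case unfolding C_def by simp
  next
    case (Suc s)
    have "x (Suc s) \<le> g * x s + D * q ^ s" by (rule step)
    also have "\<dots> \<le> m * (C * r ^ s) + D * r ^ s"
    proof (intro add_mono)
      have "g * x s \<le> g * (C * r ^ s)" using Suc \<open>0 \<le> g\<close> by (rule mult_left_mono)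
      also have "\<dots> \<le> m * (C * r ^ s)" using m C by (intro mult_right_mono) auto
      finally show "g * x s \<le> m * (C * r ^ s)" .
      show "D * q ^ s \<le> D * r ^ s" using m assms by (intro mult_left_mono power_mono) auto
    qed
    also have "\<dots> = (m * C + D) * r ^ s" by (simp add: algebra_simps)
    also have "\<dots> \<le> (r * C) * r ^ s" using C m by (intro mult_right_mono) (auto simp: algebra_simps)
    finally show ?case by (simp add: algebra_simps)
  qed
  then show ?thesis using m by (intro exI[of _ C] exI[of _ r]) auto
qed

lemma bounded_of_geometric_increments:
  fixes x :: "nat \<Rightarrow> real"
  assumes step: "\<And>s. x (Suc s) \<le> x s + D * q ^ s" and "0 \<le> q" "q < 1" "0 \<le> D"
  shows "x s \<le> x 0 + D / (1 - q)"
proof -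
  have "x s \<le> x 0 + D * (1 - q ^ s) / (1 - q)"
  proof (induction s)
    case 0
    then show ?case by simp
  next
    case (Suc s)
    have "x (Suc s) \<le> x 0 + D * (1 - q ^ s) / (1 - q) + D * q ^ s"
      using Suc step[of s] by linarith
    also have "\<dots> = x 0 + D * (1 - q ^ Suc s) / (1 - q)" using assms by (simp add: field_simps)
    finally show ?case .
  qed
  also have "D * (1 - q ^ s) / (1 - q) \<le> D / (1 - q)"
    using assms by (intro divide_right_mono mult_left_le) auto
  finally show ?thesis by simp
qed

lemma uniform_geometric_bound:
  fixes x :: "'i \<Rightarrow> nat \<Rightarrow> real"
  assumes "finite K" "\<And>k. k \<in> K \<Longrightarrow> \<exists>C r. 0 \<le> r \<and> r < 1 \<and> (\<forall>s. x k s \<le> C * r ^ s)"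
  shows "\<exists>C r. 0 \<le> C \<and> 0 \<le> r \<and> r < 1 \<and> (\<forall>k\<in>K. \<forall>s. x k s \<le> C * r ^ s)"
  using assms
proof (induction K rule: finite_induct)
  case empty
  then show ?case by (intro exI[of _ 0]) auto
next
  case (insert k K)
  obtain C1 r1 where 1: "0 \<le> C1" "0 \<le> r1" "r1 < 1" "\<forall>k\<in>K. \<forall>s. x k s \<le> C1 * r1 ^ s"
    using insert by blast
  obtain C2 r2 where 2: "0 \<le> r2" "r2 < 1" "\<forall>s. x k s \<le> C2 * r2 ^ s"
    using insert.prems[of k] by blast
  have "C * r ^ s \<le> max C1 (max C2 0) * max r1 r2 ^ s" if "C \<le> max C1 (max C2 0)" "0 \<le> r"
    "r \<le> max r1 r2" for C r s
    using that 1 by (intro mult_mono power_mono) auto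
  then have "\<forall>k'\<in>insert k K. \<forall>s. x k' s \<le> max C1 (max C2 0) * max r1 r2 ^ s"
    using 1 2 by (smt (verit) insert_iff)
  then show ?case using 1 2 by (intro exI[of _ "max C1 (max C2 0)"] exI[of _ "max r1 r2"]) auto
qed

text \<open>Induction along the order: the lower indices only add a geometrically small forcing term to
  a contraction.\<close>
lemma triangular_recursion_geometric_bound:
  fixes g :: "'i::wellorder \<Rightarrow> nat \<Rightarrow> real" and \<gamma> :: "'i \<Rightarrow> 'i \<Rightarrow> real"
  assumes "finite S"
    and nonneg: "\<And>k j. k \<in> S \<Longrightarrow> j \<in> S \<Longrightarrow> 0 \<le> \<gamma> k j"
    and contracting: "\<And>j. j \<in> S \<Longrightarrow> \<gamma> j j < 1"
    and step: "\<And>j s. j \<in> S \<Longrightarrow> g j (Suc s) \<le> \<gamma> j j * g j s + (\<Sum>k\<in>{k\<in>S. k < j}. \<gamma> k j * g k s)"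
  shows "\<exists>C r. 0 \<le> C \<and> 0 \<le> r \<and> r < 1 \<and> (\<forall>k\<in>S. \<forall>s. g k s \<le> C * r ^ s)"
proof (rule uniform_geometric_bound[OF \<open>finite S\<close>])
  fix j assume "j \<in> S"
  then show "\<exists>C r. 0 \<le> r \<and> r < 1 \<and> (\<forall>s. g j s \<le> C * r ^ s)"
  proof (induction j rule: less_induct)
    case (less j)
    define K where "K = {k\<in>S. k < j}"
    have "finite K" using \<open>finite S\<close> unfolding K_def by simp
    then obtain C q where C: "0 \<le> C" "0 \<le> q" "q < 1" "\<forall>k\<in>K. \<forall>s. g k s \<le> C * q ^ s"
      using uniform_geometric_bound[of K g] less.IH unfolding K_def by blast
    define D where "D = (\<Sum>k\<in>K. \<gamma> k j) * C"
    have "g j (Suc s) \<le> \<gamma> j j * g j s + D * q ^ s" for s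
    proof -
      have "(\<Sum>k\<in>K. \<gamma> k j * g k s) \<le> (\<Sum>k\<in>K. \<gamma> k j * (C * q ^ s))"
        using C nonneg less.prems unfolding K_def by (intro sum_mono mult_left_mono) auto
      also have "\<dots> = D * q ^ s" unfolding D_def by (simp add: sum_distrib_left mult_ac)
      finally show ?thesis using step[OF less.prems, of s] unfolding K_def by linarith
    qed
    moreover have "0 \<le> D" unfolding D_def using C nonneg less.prems
      by (intro mult_nonneg_nonneg sum_nonneg) (auto simp: K_def)
    ultimately show ?case
      using geometric_bound_of_contracting_recursion nonneg contracting less.prems C by blast
  qed
qed

text \<open>For every \<open>a > 0\<close> the functional \<open>(\<integral> X powr a) powr (1 / max 1 a)\<close> is subadditive on
  nonnegative functions: for \<open>a \<ge> 1\<close> it is the \<open>L\<^sup>a\<close> norm (Minkowski), for \<open>a \<le> 1\<close> the \<open>a\<close>-th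
  moment itself is subadditive because \<open>t powr a\<close> is.\<close>
definition moment_norm :: "'a measure \<Rightarrow> real \<Rightarrow> ('a \<Rightarrow> real) \<Rightarrow> real" where
  "moment_norm M a X = (\<integral>w. X w powr a \<partial>M) powr (1 / max 1 a)"

lemma moment_norm_nonneg: "0 \<le> moment_norm M a X"
  unfolding moment_norm_def by simp

lemma moment_norm_powr: "moment_norm M a X powr max 1 a = (\<integral>w. X w powr a \<partial>M)"
  unfolding moment_norm_def by (simp add: powr_powr)

lemma integrable_powr_add:
  fixes X Y :: "'a \<Rightarrow> real"
  assumes "0 < a"
    and "X \<in> borel_measurable M" "AE w in M. 0 \<le> X w" "integrable M (\<lambda>w. X w powr a)"
    and "Y \<in> borel_measurable M" "AE w in M. 0 \<le> Y w" "integrable M (\<lambda>w. Y w powr a)"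
  shows "integrable M (\<lambda>w. (X w + Y w) powr a)"
proof (rule Bochner_Integration.integrable_bound)
  show "integrable M (\<lambda>w. 2 powr a * (X w powr a + Y w powr a))" using assms by auto
  show "AE w in M. norm ((X w + Y w) powr a) \<le> norm (2 powr a * (X w powr a + Y w powr a))"
    using assms(3,6) by eventually_elim (use powr_add_le_two_powr assms(1) in auto)
qed (use assms in measurable)

lemma integral_powr_add_eq_of_integral_eq_0:
  fixes X Y :: "'a \<Rightarrow> real"
  assumes "X \<in> borel_measurable M" "integrable M (\<lambda>w. X w powr a)" "(\<integral>w. X w powr a \<partial>M) = 0"
    and "Y \<in> borel_measurable M"
  shows "(\<integral>w. (X w + Y w) powr a \<partial>M) = (\<integral>w. Y w powr a \<partial>M)"
proof (rule integral_cong_AE)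
  have "AE w in M. X w powr a = 0"
    using assms by (subst integral_nonneg_eq_0_iff_AE[symmetric]) auto
  then show "AE w in M. (X w + Y w) powr a = Y w powr a" by eventually_elim simp
qed (use assms in measurable)

lemma moment_norm_add_le_of_le_1:
  fixes X Y :: "'a \<Rightarrow> real"
  assumes a: "0 < a" "a \<le> 1"
    and X: "X \<in> borel_measurable M" "AE w in M. 0 \<le> X w" "integrable M (\<lambda>w. X w powr a)"
    and Y: "Y \<in> borel_measurable M" "AE w in M. 0 \<le> Y w" "integrable M (\<lambda>w. Y w powr a)"
  shows "moment_norm M a (\<lambda>w. X w + Y w) \<le> moment_norm M a X + moment_norm M a Y"
proof -
  have "(\<integral>w. (X w + Y w) powr a \<partial>M) \<le> (\<integral>w. X w powr a + Y w powr a \<partial>M)"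
  proof (rule integral_mono_AE[OF integrable_powr_add[OF a(1) X Y]])
    show "AE w in M. (X w + Y w) powr a \<le> X w powr a + Y w powr a"
      using X(2) Y(2) by eventually_elim (use powr_add_le_add_powr a in auto)
  qed (use X Y in auto)
  moreover have "moment_norm M a Z = (\<integral>w. Z w powr a \<partial>M)" for Z
    using a by (simp add: moment_norm_def max_absorb1)
  ultimately show ?thesis using X Y by simp
qed

lemma integral_powr_add_le_weighted:
  fixes X Y :: "'a \<Rightarrow> real"
  assumes a: "1 \<le> a" and l: "0 < l" "l < 1"
    and X: "X \<in> borel_measurable M" "AE w in M. 0 \<le> X w" "integrable M (\<lambda>w. X w powr a)"
    and Y: "Y \<in> borel_measurable M" "AE w in M. 0 \<le> Y w" "integrable M (\<lambda>w. Y w powr a)"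
  shows "(\<integral>w. (X w + Y w) powr a \<partial>M)
    \<le> l powr (1 - a) * (\<integral>w. X w powr a \<partial>M) + (1 - l) powr (1 - a) * (\<integral>w. Y w powr a \<partial>M)"
proof -
  have "(\<integral>w. (X w + Y w) powr a \<partial>M)
      \<le> (\<integral>w. l powr (1 - a) * X w powr a + (1 - l) powr (1 - a) * Y w powr a \<partial>M)"
  proof (rule integral_mono_AE)
    show "integrable M (\<lambda>w. (X w + Y w) powr a)"
      using a by (intro integrable_powr_add[OF _ X Y]) simp
    show "AE w in M. (X w + Y w) powr a \<le> l powr (1 - a) * X w powr a + (1 - l) powr (1 - a) * Y w powr a"
      using X(2) Y(2) by eventually_elim (use powr_add_le_weighted a l in auto)
  qed (use X Y in auto)
  then show ?thesis using X Y by simp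
qed

lemma moment_norm_add_le_of_ge_1:
  fixes X Y :: "'a \<Rightarrow> real"
  assumes a: "1 \<le> a"
    and X: "X \<in> borel_measurable M" "AE w in M. 0 \<le> X w" "integrable M (\<lambda>w. X w powr a)"
    and Y: "Y \<in> borel_measurable M" "AE w in M. 0 \<le> Y w" "integrable M (\<lambda>w. Y w powr a)"
  shows "moment_norm M a (\<lambda>w. X w + Y w) \<le> moment_norm M a X + moment_norm M a Y"
proof -
  define x y where "x = moment_norm M a X" and "y = moment_norm M a Y"
  have norm_a: "moment_norm M a Z = (\<integral>w. Z w powr a \<partial>M) powr (1 / a)" for Z
    using a by (simp add: moment_norm_def max_absorb2)
  have xy_a: "x powr a = (\<integral>w. X w powr a \<partial>M)" "y powr a = (\<integral>w. Y w powr a \<partial>M)"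
    using a unfolding x_def y_def norm_a by (simp_all add: powr_powr)
  consider "x = 0" | "y = 0" | "0 < x" "0 < y"
    unfolding x_def y_def using moment_norm_nonneg[of M a] by (metis order.not_eq_order_implies_strict)
  then show ?thesis
  proof cases
    case 1
    then show ?thesis
      using integral_powr_add_eq_of_integral_eq_0[of X M a Y] X Y xy_a a
      by (simp add: norm_a x_def y_def)
  next
    case 2
    then show ?thesis
      using integral_powr_add_eq_of_integral_eq_0[of Y M a X] X Y xy_a a
      by (simp add: norm_a x_def y_def add.commute)
  next
    case 3
    text \<open>Weighting the convexity inequality by the norms of \<open>X\<close> and \<open>Y\<close> makes it sharp.\<close>
    have "(\<integral>w. (X w + Y w) powr a \<partial>M)
        \<le> (x / (x + y)) powr (1 - a) * x powr a + (1 - x / (x + y)) powr (1 - a) * y powr a"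
      unfolding xy_a using 3 by (intro integral_powr_add_le_weighted[OF a _ _ X Y]) auto
    also have "\<dots> = (x + y) powr a"
      using 3 powr_add_weighted_eq[of x y a] by (simp add: field_simps)
    finally have "(\<integral>w. (X w + Y w) powr a \<partial>M) powr (1 / a) \<le> ((x + y) powr a) powr (1 / a)"
      using a by (intro powr_mono2) auto
    then show ?thesis using 3 a by (simp add: norm_a powr_powr x_def y_def)
  qed
qed

lemma moment_norm_add_le:
  fixes X Y :: "'a \<Rightarrow> real"
  assumes "0 < a"
    and "X \<in> borel_measurable M" "AE w in M. 0 \<le> X w" "integrable M (\<lambda>w. X w powr a)"
    and "Y \<in> borel_measurable M" "AE w in M. 0 \<le> Y w" "integrable M (\<lambda>w. Y w powr a)"
  shows "moment_norm M a (\<lambda>w. X w + Y w) \<le> moment_norm M a X + moment_norm M a Y"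
  using moment_norm_add_le_of_le_1[of a] moment_norm_add_le_of_ge_1[of a] assms
  by (cases "a \<le> 1") auto

lemma AE_sum_nonneg:
  assumes "finite K" "\<And>k. k \<in> K \<Longrightarrow> AE w in M. 0 \<le> X k w"
  shows "AE w in M. 0 \<le> (\<Sum>k\<in>K. X k w :: real)"
proof -
  have "AE w in M. \<forall>k\<in>K. 0 \<le> X k w" using assms by (intro AE_finite_allI) auto
  then show ?thesis by eventually_elim (auto intro: sum_nonneg)
qed

lemma integrable_powr_sum:
  fixes X :: "'i \<Rightarrow> 'a \<Rightarrow> real"
  assumes "0 < a" "finite K"
    and "\<And>k. k \<in> K \<Longrightarrow> X k \<in> borel_measurable M"
    and "\<And>k. k \<in> K \<Longrightarrow> AE w in M. 0 \<le> X k w"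
    and "\<And>k. k \<in> K \<Longrightarrow> integrable M (\<lambda>w. X k w powr a)"
  shows "integrable M (\<lambda>w. (\<Sum>k\<in>K. X k w) powr a)"
  using assms(2-)
proof (induction K rule: finite_induct)
  case (insert k K)
  then show ?case
    using integrable_powr_add[OF \<open>0 < a\<close>, of "X k" M "\<lambda>w. \<Sum>k\<in>K. X k w"] AE_sum_nonneg[where K=K and M=M and X=X]
    by simp
qed simp

lemma moment_norm_sum_le:
  fixes X :: "'i \<Rightarrow> 'a \<Rightarrow> real"
  assumes "0 < a" "finite K"
    and "\<And>k. k \<in> K \<Longrightarrow> X k \<in> borel_measurable M"
    and "\<And>k. k \<in> K \<Longrightarrow> AE w in M. 0 \<le> X k w"
    and "\<And>k. k \<in> K \<Longrightarrow> integrable M (\<lambda>w. X k w powr a)"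
  shows "moment_norm M a (\<lambda>w. \<Sum>k\<in>K. X k w) \<le> (\<Sum>k\<in>K. moment_norm M a (X k))"
  using assms(2-)
proof (induction K rule: finite_induct)
  case empty
  then show ?case by (simp add: moment_norm_def)
next
  case (insert k K)
  have "moment_norm M a (\<lambda>w. X k w + (\<Sum>k\<in>K. X k w)) \<le> moment_norm M a (X k) + moment_norm M a (\<lambda>w. \<Sum>k\<in>K. X k w)"
    using insert.prems insert.hyps AE_sum_nonneg[where K=K and M=M and X=X] integrable_powr_sum[OF \<open>0 < a\<close>, of K X M]
    by (intro moment_norm_add_le \<open>0 < a\<close>) auto
  then show ?case using insert by simp
qed

lemma (in finite_measure) integrable_powr_mono:
  fixes X :: "'a \<Rightarrow> real"
  assumes "X \<in> borel_measurable M" "integrable M (\<lambda>w. X w powr c)" "0 \<le> b" "b \<le> c"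
  shows "integrable M (\<lambda>w. X w powr b)"
proof (rule Bochner_Integration.integrable_bound)
  show "integrable M (\<lambda>w. 1 + X w powr c)" using assms by simp
  show "AE w in M. norm (X w powr b) \<le> norm (1 + X w powr c)"
    using powr_le_one_plus_powr[OF assms(3,4)] by (auto intro!: AE_I2 add_nonneg_nonneg)
qed (use assms in measurable)

lemma (in prob_space) integral_powr_mult_indep:
  fixes X Y :: "'a \<Rightarrow> real"
  assumes "indep_var borel X borel Y"
    and "AE w in M. 0 \<le> X w" "integrable M (\<lambda>w. X w powr a)"
    and "AE w in M. 0 \<le> Y w" "integrable M (\<lambda>w. Y w powr a)"
  shows "integrable M (\<lambda>w. (X w * Y w) powr a)"
    and "(\<integral>w. (X w * Y w) powr a \<partial>M) = (\<integral>w. X w powr a \<partial>M) * (\<integral>w. Y w powr a \<partial>M)"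
proof -
  have "indep_var borel ((\<lambda>x. x powr a) \<circ> X) borel ((\<lambda>x. x powr a) \<circ> Y)"
    by (rule indep_var_compose[OF assms(1)]) auto
  then have indep: "indep_var borel (\<lambda>w. X w powr a) borel (\<lambda>w. Y w powr a)"
    by (simp add: comp_def)
  have measurable: "X \<in> borel_measurable M" "Y \<in> borel_measurable M"
    using indep_var_rv1[OF assms(1)] indep_var_rv2[OF assms(1)] by auto
  have eq: "AE w in M. (X w * Y w) powr a = X w powr a * Y w powr a"
    using assms(2,4) by eventually_elim (simp add: powr_mult)
  have int: "integrable M (\<lambda>w. X w powr a * Y w powr a)"
    by (rule indep_var_integrable[OF indep assms(3,5)])
  then show "integrable M (\<lambda>w. (X w * Y w) powr a)"
    using eq measurable by (subst integrable_cong_AE) auto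
  have "(\<integral>w. (X w * Y w) powr a \<partial>M) = (\<integral>w. X w powr a * Y w powr a \<partial>M)"
    using eq measurable by (intro integral_cong_AE) auto
  also have "\<dots> = (\<integral>w. X w powr a \<partial>M) * (\<integral>w. Y w powr a \<partial>M)"
    by (rule indep_var_lebesgue_integral[OF indep assms(3,5)])
  finally show "(\<integral>w. (X w * Y w) powr a \<partial>M) = (\<integral>w. X w powr a \<partial>M) * (\<integral>w. Y w powr a \<partial>M)" .
qed

lemma integral_powr_pos:
  fixes X :: "'a \<Rightarrow> real"
  assumes "X \<in> borel_measurable M" "integrable M (\<lambda>w. X w powr a)"
    and "0 < measure M {w \<in> space M. 0 < X w}"
  shows "0 < (\<integral>w. X w powr a \<partial>M)"
proof (rule ccontr)
  assume "\<not> 0 < (\<integral>w. X w powr a \<partial>M)"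
  moreover have "0 \<le> (\<integral>w. X w powr a \<partial>M)" by simp
  ultimately have "(\<integral>w. X w powr a \<partial>M) = 0" by simp
  then have "AE w in M. X w powr a = 0" using assms by (subst integral_nonneg_eq_0_iff_AE[symmetric]) auto
  then have "AE w in M. w \<notin> {w \<in> space M. 0 < X w}" by eventually_elim simp
  then have "measure M {w \<in> space M. 0 < X w} = 0"
    using assms(1) by (subst measure_eq_0_null_sets) (auto simp: AE_iff_null_sets)
  then show False using assms(3) by simp
qed

text \<open>Strict concavity of \<open>t powr (b / c)\<close>, applied to \<open>X powr c\<close> which has mean \<open>1\<close>.\<close>
lemma (in prob_space) integral_powr_less_one:
  fixes X :: "'a \<Rightarrow> real"
  assumes X: "X \<in> borel_measurable M" "AE w in M. 0 \<le> X w"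
    and int: "integrable M (\<lambda>w. X w powr c)" "(\<integral>w. X w powr c \<partial>M) = 1"
    and "0 < b" "b < c" and nondegenerate: "\<not> (AE w in M. X w = 1)"
  shows "(\<integral>w. X w powr b \<partial>M) < 1"
proof (rule ccontr)
  assume "\<not> (\<integral>w. X w powr b \<partial>M) < 1"
  define q where "q = b / c"
  have q: "0 < q" "q < 1" unfolding q_def using assms by auto
  have Xb: "X w powr b = (X w powr c) powr q" for w
    unfolding q_def using assms by (simp add: powr_powr)
  define h where "h w = q * X w powr c + (1 - q) - X w powr b" for w
  have h_nonneg: "0 \<le> h w" for w
    unfolding h_def Xb using powr_le_tangent[OF q] by simp
  have int_b: "integrable M (\<lambda>w. X w powr b)"
    using integrable_powr_mono[OF X(1) int(1)] assms by simp
  have "(\<integral>w. h w \<partial>M) = 1 - (\<integral>w. X w powr b \<partial>M)"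
    unfolding h_def using int int_b by (simp add: prob_space)
  moreover have "0 \<le> (\<integral>w. h w \<partial>M)" using h_nonneg by simp
  ultimately have "(\<integral>w. h w \<partial>M) = 0" using \<open>\<not> _ < 1\<close> by simp
  then have "AE w in M. h w = 0"
    using h_nonneg int int_b unfolding h_def by (subst integral_nonneg_eq_0_iff_AE[symmetric]) auto
  then have "AE w in M. X w = 1"
    using X(2)
  proof eventually_elim
    case (elim w)
    have "X w powr c = 1"
    proof (rule ccontr)
      assume "X w powr c \<noteq> 1"
      then have "(X w powr c) powr q < q * X w powr c + (1 - q)"
        by (intro powr_less_tangent[OF q]) simp_all
      then have "0 < h w" unfolding h_def Xb by simp
      with elim show False by simp
    qed
    then have "X w \<noteq> 0" by auto
    then have "X w = (X w powr c) powr (1 / c)" using \<open>0 \<le> X w\<close> assms(5,6) by (simp add: powr_powr)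
    then show "X w = 1" using \<open>X w powr c = 1\<close> by simp
  qed
  with nondegenerate show False ..
qed

lemma (in prob_space) not_AE_eq_1_if_non_arithmetic:
  fixes X :: "'a \<Rightarrow> real"
  assumes [measurable]: "X \<in> borel_measurable M"
    and "non_arithmetic_given M (\<lambda>w. ln (X w)) (\<lambda>w. 0 < X w)"
  shows "\<not> (AE w in M. X w = 1)"
proof
  assume X1: "AE w in M. X w = 1"
  have "prob {w \<in> space M. 0 < X w \<and> (\<exists>k::int. ln (X w) = 1 * of_int k)} = 1"
  proof (subst prob_Collect_eq_1)
    show "AE w in M. 0 < X w \<and> (\<exists>k::int. ln (X w) = 1 * of_int k)"
      using X1 by eventually_elim (auto intro: exI[of _ 0])
  qed measurable
  moreover have "prob {w \<in> space M. 0 < X w} = 1"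
  proof (subst prob_Collect_eq_1)
    show "AE w in M. 0 < X w" using X1 by eventually_elim simp
  qed measurable
  ultimately show False
    using assms(2)[unfolded non_arithmetic_given_def, rule_format, of 1] by simp
qed

lemma piM_cong:
  assumes "\<And>t k l. t \<in> {- int s<..0} \<Longrightarrow> k \<in> {1..d} \<Longrightarrow> l \<in> {1..d} \<Longrightarrow> A t w k l = A' t w' k l"
    and "j \<in> {1..d}"
  shows "piM d A s w i j = piM d A' s w' i j"
  using assms
proof (induction s arbitrary: j)
  case (Suc s)
  have "piM d A s w i k = piM d A' s w' i k" if "k \<in> {1..d}" for k
    using Suc.prems that by (intro Suc.IH) auto
  then show ?case using Suc.prems by simp
qed simp

lemma measurable_piM:
  assumes "\<And>t k l. t \<in> {- int s<..0} \<Longrightarrow> k \<in> {1..d} \<Longrightarrow> l \<in> {1..d} \<Longrightarrow>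
      (\<lambda>w. A t w k l) \<in> borel_measurable N"
    and "j \<in> {1..d}"
  shows "(\<lambda>w. piM d A s w i j) \<in> borel_measurable N"
  using assms
proof (induction s arbitrary: j)
  case (Suc s)
  have "(\<lambda>w. piM d A s w i k) \<in> borel_measurable N" if "k \<in> {1..d}" for k
    using Suc.prems that by (intro Suc.IH) auto
  then show ?case using Suc.prems by simp
qed simp

lemma piM_nonneg:
  assumes "\<And>t k l. k \<in> {1..d} \<Longrightarrow> l \<in> {1..d} \<Longrightarrow> 0 \<le> A t w k l" and "j \<in> {1..d}"
  shows "0 \<le> piM d A s w i j"
  using assms(2) by (induction s arbitrary: j) (auto intro!: sum_nonneg mult_nonneg_nonneg assms(1))

lemma piM_eq_0_unless_rtranclp:
  assumes "\<And>t k l. k \<in> {1..d} \<Longrightarrow> l \<in> {1..d} \<Longrightarrow> \<not> R k l \<Longrightarrow> A t w k l = 0"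
    and "j \<in> {1..d}" "\<not> R\<^sup>*\<^sup>* i j"
  shows "piM d A s w i j = 0"
  using assms(2,3)
proof (induction s arbitrary: j)
  case (Suc s)
  have "piM d A s w i k * A (- int s) w k j = 0" if "k \<in> {1..d}" for k
    using Suc that assms(1) rtranclp.rtrancl_into_rtrancl[of R i k j] by (cases "R\<^sup>*\<^sup>* i k") auto
  then show ?case by (simp add: sum.neutral)
qed auto

lemma piM_Suc_eq_sum_preds:
  assumes "\<And>t k l. k \<in> {1..d} \<Longrightarrow> l \<in> {1..d} \<Longrightarrow> \<not> R k l \<Longrightarrow> A t w k l = 0" and "j \<in> {1..d}"
  shows "piM d A (Suc s) w i j = (\<Sum>k\<in>{k\<in>{1..d}. R\<^sup>*\<^sup>* i k \<and> R k j}. piM d A s w i k * A (- int s) w k j)"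
proof -
  have "piM d A s w i k * A (- int s) w k j = 0" if "k \<in> {1..d}" "\<not> (R\<^sup>*\<^sup>* i k \<and> R k j)" for k
    using that assms piM_eq_0_unless_rtranclp[where A=A and w=w and R=R, OF assms(1)] by auto
  then have "(\<Sum>k\<in>{1..d}. piM d A s w i k * A (- int s) w k j)
      = (\<Sum>k\<in>{k\<in>{1..d}. R\<^sup>*\<^sup>* i k \<and> R k j}. piM d A s w i k * A (- int s) w k j)"
    by (intro sum.mono_neutral_right) auto
  then show ?thesis by simp
qed

lemma piM_Suc_ge:
  assumes "\<And>t k l. k \<in> {1..d} \<Longrightarrow> l \<in> {1..d} \<Longrightarrow> 0 \<le> A t w k l" and "k \<in> {1..d}" "j \<in> {1..d}"
  shows "piM d A s w i k * A (- int s) w k j \<le> piM d A (Suc s) w i j"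
proof -
  have "0 \<le> piM d A s w i m * A (- int s) w m j" if "m \<in> {1..d}" for m
    using piM_nonneg[where A=A and w=w, OF assms(1)] assms that by simp
  then have "piM d A s w i k * A (- int s) w k j \<le> (\<Sum>m\<in>{1..d}. piM d A s w i m * A (- int s) w m j)"
    using assms(2) by (intro member_le_sum) auto
  then show ?thesis by simp
qed

locale iid_matrix_model = prob_space M
  for M :: "'a measure" +
  fixes d :: nat
    and A :: "int \<Rightarrow> 'a \<Rightarrow> nat \<Rightarrow> nat \<Rightarrow> real" and B :: "int \<Rightarrow> 'a \<Rightarrow> nat \<Rightarrow> real"
    and \<alpha> :: "nat \<Rightarrow> real"
  assumes iid: "iid_AB M d A B"
    and condition_T: "condition_T M d A B \<alpha>"
begin

lemma measurable_obsAB: "obsAB d A B t \<in> measurable M (MAB d)"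
  using iid unfolding iid_AB_def indep_vars_def by auto

lemma measurable_entry:
  "k \<in> {1..d} \<Longrightarrow> l \<in> {1..d} \<Longrightarrow> (\<lambda>x. fst x (k, l)) \<in> borel_measurable (MAB d)"
  unfolding MAB_def by (rule measurable_compose[OF measurable_fst measurable_component_singleton]) auto

lemma entry_obsAB: "k \<in> {1..d} \<Longrightarrow> l \<in> {1..d} \<Longrightarrow> fst (obsAB d A B t w) (k, l) = A t w k l"
  by (simp add: obsAB_def)

lemma measurable_A:
  "k \<in> {1..d} \<Longrightarrow> l \<in> {1..d} \<Longrightarrow> (\<lambda>w. A t w k l) \<in> borel_measurable M"
  using measurable_compose[OF measurable_obsAB measurable_entry] by (simp add: entry_obsAB)

lemma distr_A:
  assumes "k \<in> {1..d}" "l \<in> {1..d}"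
  shows "distr M borel (\<lambda>w. A t w k l) = distr M borel (\<lambda>w. A 0 w k l)"
proof -
  have "distr M borel (\<lambda>w. A t w k l) = distr (distr M (MAB d) (obsAB d A B t)) borel (\<lambda>x. fst x (k, l))"
    for t
    using distr_distr[OF measurable_entry[OF assms] measurable_obsAB] assms
    by (simp add: comp_def entry_obsAB)
  moreover have "distr M (MAB d) (obsAB d A B t) = distr M (MAB d) (obsAB d A B 0)"
    using iid unfolding iid_AB_def by blast
  ultimately show ?thesis by simp
qed

lemma integral_A_shift:
  fixes f :: "real \<Rightarrow> real"
  assumes "k \<in> {1..d}" "l \<in> {1..d}" "f \<in> borel_measurable borel"
  shows "(\<integral>w. f (A t w k l) \<partial>M) = (\<integral>w. f (A 0 w k l) \<partial>M)"
proof -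
  have eq: "(\<integral>w. f (A t w k l) \<partial>M) = integral\<^sup>L (distr M borel (\<lambda>w. A t w k l)) f" for t
    using integral_distr[OF measurable_A[OF assms(1,2)] assms(3)] by simp
  show ?thesis by (simp only: eq distr_A[OF assms(1,2), of t])
qed

lemma integrable_A_shift:
  fixes f :: "real \<Rightarrow> real"
  assumes "k \<in> {1..d}" "l \<in> {1..d}" "f \<in> borel_measurable borel"
  shows "integrable M (\<lambda>w. f (A t w k l)) \<longleftrightarrow> integrable M (\<lambda>w. f (A 0 w k l))"
proof -
  have eq: "integrable M (\<lambda>w. f (A t w k l)) \<longleftrightarrow> integrable (distr M borel (\<lambda>w. A t w k l)) f" for t
    using integrable_distr_eq[OF measurable_A[OF assms(1,2)] assms(3)] by simp
  show ?thesis by (simp only: eq distr_A[OF assms(1,2), of t])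
qed

lemma AE_A_shift:
  assumes "k \<in> {1..d}" "l \<in> {1..d}" "S \<in> sets borel"
  shows "(AE w in M. A t w k l \<in> S) \<longleftrightarrow> (AE w in M. A 0 w k l \<in> S)"
proof -
  have "{x \<in> space borel. x \<in> S} \<in> sets borel" using assms(3) by simp
  then have eq: "(AE w in M. A t w k l \<in> S) \<longleftrightarrow> (AE x in distr M borel (\<lambda>w. A t w k l). x \<in> S)" for t
    using AE_distr_iff[OF measurable_A[OF assms(1,2)]] by simp
  show ?thesis by (simp only: eq distr_A[OF assms(1,2), of t])
qed

lemma condition_T_nonneg: "AE w in M. \<forall>k\<in>{1..d}. \<forall>l\<in>{1..d}. 0 \<le> A 0 w k l"
  using condition_T unfolding condition_T_def by (auto elim: AE_mp)

lemma condition_T_triangular: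
  "k \<in> {1..d} \<Longrightarrow> l \<in> {1..d} \<Longrightarrow> l < k \<Longrightarrow> prob {w \<in> space M. A 0 w k l = 0} = 1"
  using condition_T unfolding condition_T_def by blast

lemma condition_T_diagonal:
  assumes "k \<in> {1..d}"
  shows "0 < \<alpha> k" "integrable M (\<lambda>w. A 0 w k k powr \<alpha> k)" "(\<integral>w. A 0 w k k powr \<alpha> k \<partial>M) = 1"
  using condition_T assms unfolding condition_T_def by blast+

lemma inj_on_alpha: "inj_on \<alpha> {1..d}"
  using condition_T unfolding condition_T_def by blast

lemma condition_T_integrable:
  "k \<in> {1..d} \<Longrightarrow> l \<in> {1..d} \<Longrightarrow> integrable M (\<lambda>w. A 0 w k l powr \<alpha> k)"
  using condition_T unfolding condition_T_def by blast

lemma condition_T_non_arithmetic: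
  "k \<in> {1..d} \<Longrightarrow> non_arithmetic_given M (\<lambda>w. ln (A 0 w k k)) (\<lambda>w. 0 < A 0 w k k)"
  using condition_T unfolding condition_T_def by blast

lemma AE_A_nonneg:
  assumes "k \<in> {1..d}" "l \<in> {1..d}"
  shows "AE w in M. 0 \<le> A t w k l"
proof -
  have "AE w in M. 0 \<le> A 0 w k l"
    using condition_T_nonneg by eventually_elim (use assms in auto)
  then show ?thesis using AE_A_shift[OF assms, of "{0..}"] by simp
qed

lemma AE_A_eq_0_unless_prec:
  assumes "k \<in> {1..d}" "l \<in> {1..d}" "\<not> prec M d A k l"
  shows "AE w in M. A t w k l = 0"
proof -
  have [measurable]: "(\<lambda>w. A 0 w k l) \<in> borel_measurable M" using assms(1,2) by (rule measurable_A)
  have pos: "{w \<in> space M. 0 < A 0 w k l} \<in> events" by measurable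
  have "\<not> 0 < prob {w \<in> space M. 0 < A 0 w k l}" using assms unfolding prec_def by simp
  then have "prob {w \<in> space M. 0 < A 0 w k l} = 0"
    using measure_nonneg[of M "{w \<in> space M. 0 < A 0 w k l}"] by linarith
  then have "AE w in M. \<not> 0 < A 0 w k l" using prob_Collect_eq_0[OF pos] by simp
  then have "AE w in M. A 0 w k l = 0"
    using AE_A_nonneg[OF assms(1,2), of 0] by eventually_elim simp
  then show ?thesis using AE_A_shift[OF assms(1,2), of "{0}"] by simp
qed

lemma prec_in_range: "prec M d A k l \<Longrightarrow> k \<in> {1..d} \<and> l \<in> {1..d}"
  unfolding prec_def by simp

lemma prec_imp_le:
  assumes "prec M d A k l"
  shows "k \<le> l"
proof (rule ccontr)
  assume "\<not> k \<le> l"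
  have kl: "k \<in> {1..d}" "l \<in> {1..d}" using prec_in_range[OF assms] by auto
  have [measurable]: "(\<lambda>w. A 0 w k l) \<in> borel_measurable M" using kl by (rule measurable_A)
  have zero: "{w \<in> space M. A 0 w k l = 0} \<in> events" and pos: "{w \<in> space M. 0 < A 0 w k l} \<in> events"
    by measurable
  have "prob {w \<in> space M. A 0 w k l = 0} = 1"
    using condition_T_triangular kl \<open>\<not> k \<le> l\<close> by simp
  then have "AE w in M. A 0 w k l = 0" using prob_Collect_eq_1[OF zero] by simp
  then have "AE w in M. \<not> 0 < A 0 w k l" by eventually_elim simp
  then have "prob {w \<in> space M. 0 < A 0 w k l} = 0" using prob_Collect_eq_0[OF pos] by simp
  then show False using assms unfolding prec_def by simp
qed

lemma trle_imp_le: "trle M d A k l \<Longrightarrow> k \<le> l"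
  unfolding trle_def by (induction rule: rtranclp_induct) (auto dest: prec_imp_le)

lemma trle_in_range: "trle M d A k l \<Longrightarrow> k \<in> {1..d} \<Longrightarrow> l \<in> {1..d}"
  unfolding trle_def by (induction rule: rtranclp_induct) (auto dest: prec_in_range)

lemma AE_support:
  "AE w in M. \<forall>t. \<forall>k\<in>{1..d}. \<forall>l\<in>{1..d}. 0 \<le> A t w k l \<and> (\<not> prec M d A k l \<longrightarrow> A t w k l = 0)"
proof -
  have "AE w in M. 0 \<le> A t w k l \<and> (\<not> prec M d A k l \<longrightarrow> A t w k l = 0)"
    if "k \<in> {1..d}" "l \<in> {1..d}" for t k l
    using AE_A_nonneg[OF that, of t] AE_A_eq_0_unless_prec[OF that, of t]
    by (cases "prec M d A k l") auto
  then have "AE w in M. \<forall>k\<in>{1..d}. \<forall>l\<in>{1..d}. 0 \<le> A t w k l \<and> (\<not> prec M d A k l \<longrightarrow> A t w k l = 0)"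
    for t by (intro AE_finite_allI) auto
  then show ?thesis by (subst AE_all_countable) blast
qed

lemma measurable_path_entry:
  assumes "t \<in> J" "k \<in> {1..d}" "l \<in> {1..d}"
  shows "(\<lambda>x. fst (x t) (k, l)) \<in> borel_measurable (PiM J (\<lambda>_. MAB d))"
  by (rule measurable_compose[OF measurable_component_singleton[OF assms(1)] measurable_entry[OF assms(2,3)]])

text \<open>\<open>\<pi>(s)\<close> only involves the \<open>A\<^sub>t\<close> with \<open>-s < t \<le> 0\<close>.\<close>
lemma indep_piM_A:
  assumes "k \<in> {1..d}" "j \<in> {1..d}"
  shows "indep_var borel (\<lambda>w. piM d A s w i k) borel (\<lambda>w. A (- int s) w k j)"
proof -
  define J K :: "int set" where "J = {- int s<..0}" and "K = {- int s}"
  define path where "path I w = (\<lambda>t\<in>I. obsAB d A B t w)" for I w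
  define entry where "entry t x k l = fst (x t) (k, l)"
    for t and x :: "int \<Rightarrow> (nat \<times> nat \<Rightarrow> real) \<times> (nat \<Rightarrow> real)" and k l
  have "indep_var (PiM J (\<lambda>_. MAB d)) (path J) (PiM K (\<lambda>_. MAB d)) (path K)"
    unfolding path_def using iid unfolding iid_AB_def
    by (intro indep_var_restrict) (auto simp: J_def K_def)
  moreover have "(\<lambda>x. piM d entry s x i k) \<in> borel_measurable (PiM J (\<lambda>_. MAB d))"
    unfolding entry_def using assms(1) by (intro measurable_piM measurable_path_entry) (auto simp: J_def)
  moreover have "(\<lambda>x. entry (- int s) x k j) \<in> borel_measurable (PiM K (\<lambda>_. MAB d))"
    unfolding entry_def using assms by (intro measurable_path_entry) (auto simp: K_def)
  ultimately have "indep_var borel ((\<lambda>x. piM d entry s x i k) \<circ> path J)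
      borel ((\<lambda>x. entry (- int s) x k j) \<circ> path K)"
    by (rule indep_var_compose)
  moreover have "((\<lambda>x. piM d entry s x i k) \<circ> path J) w = piM d A s w i k" for w
    using assms(1) by (auto simp: path_def entry_def J_def entry_obsAB intro!: piM_cong[symmetric])
  moreover have "((\<lambda>x. entry (- int s) x k j) \<circ> path K) w = A (- int s) w k j" for w
    using assms by (simp add: path_def entry_def K_def entry_obsAB)
  ultimately show ?thesis by (simp add: comp_def)
qed

end

locale moment_model = iid_matrix_model +
  fixes i :: nat and a :: real
  assumes i_in_range: "i \<in> {1..d}"
    and exponent_pos: "0 < a"
    and exponent_le: "\<And>k. trle M d A i k \<Longrightarrow> a \<le> \<alpha> k"
begin

abbreviation path_norm :: "nat \<Rightarrow> nat \<Rightarrow> real" where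
  "path_norm j s \<equiv> moment_norm M a (\<lambda>w. piM d A s w i j)"

abbreviation entry_norm :: "nat \<Rightarrow> nat \<Rightarrow> real" where
  "entry_norm k l \<equiv> moment_norm M a (\<lambda>w. A 0 w k l)"

lemma measurable_path: "j \<in> {1..d} \<Longrightarrow> (\<lambda>w. piM d A s w i j) \<in> borel_measurable M"
  by (intro measurable_piM measurable_A) auto

lemma AE_path_nonneg: "j \<in> {1..d} \<Longrightarrow> AE w in M. 0 \<le> piM d A s w i j"
  using AE_support by eventually_elim (auto intro: piM_nonneg)

lemma AE_path_Suc:
  assumes "j \<in> {1..d}"
  shows "AE w in M. piM d A (Suc s) w i j
    = (\<Sum>k\<in>{k\<in>{1..d}. trle M d A i k \<and> prec M d A k j}. piM d A s w i k * A (- int s) w k j)"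
  using AE_support
proof eventually_elim
  case (elim w)
  then show ?case
    using piM_Suc_eq_sum_preds[where R="prec M d A" and A=A and w=w and i=i and s=s] assms unfolding trle_def by auto
qed

lemma integrable_A_powr:
  assumes "trle M d A i k" "l \<in> {1..d}"
  shows "integrable M (\<lambda>w. A t w k l powr a)"
proof -
  have k: "k \<in> {1..d}" using trle_in_range[OF assms(1) i_in_range] .
  have "integrable M (\<lambda>w. A 0 w k l powr a)"
    using integrable_powr_mono[OF measurable_A[OF k assms(2)] condition_T_integrable[OF k assms(2)]]
      exponent_pos exponent_le[OF assms(1)] by simp
  moreover have "(\<lambda>x::real. x powr a) \<in> borel_measurable borel" by simp
  ultimately show ?thesis using integrable_A_shift[OF k assms(2), of "\<lambda>x. x powr a" t] by simp
qed

lemma integral_path_times_A_powr: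
  assumes "trle M d A i k" "j \<in> {1..d}" "integrable M (\<lambda>w. piM d A s w i k powr a)"
  shows "integrable M (\<lambda>w. (piM d A s w i k * A (- int s) w k j) powr a)"
    and "(\<integral>w. (piM d A s w i k * A (- int s) w k j) powr a \<partial>M)
      = (\<integral>w. piM d A s w i k powr a \<partial>M) * (\<integral>w. A 0 w k j powr a \<partial>M)"
proof -
  have k: "k \<in> {1..d}" using trle_in_range[OF assms(1) i_in_range] .
  note product = integral_powr_mult_indep[OF indep_piM_A[OF k assms(2)] AE_path_nonneg[OF k] assms(3)
      AE_A_nonneg[OF k assms(2)] integrable_A_powr[OF assms(1,2)]]
  show "integrable M (\<lambda>w. (piM d A s w i k * A (- int s) w k j) powr a)" by (rule product(1))
  show "(\<integral>w. (piM d A s w i k * A (- int s) w k j) powr a \<partial>M)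
      = (\<integral>w. piM d A s w i k powr a \<partial>M) * (\<integral>w. A 0 w k j powr a \<partial>M)"
    using product(2) integral_A_shift[OF k assms(2), of "\<lambda>x. x powr a" "- int s"] by simp
qed

lemma measurable_path_times_A:
  "k \<in> {1..d} \<Longrightarrow> j \<in> {1..d} \<Longrightarrow> (\<lambda>w. piM d A s w i k * A t w k j) \<in> borel_measurable M"
  by (intro borel_measurable_times measurable_path measurable_A)

lemma AE_path_times_A_nonneg:
  assumes "k \<in> {1..d}" "j \<in> {1..d}"
  shows "AE w in M. 0 \<le> piM d A s w i k * A t w k j"
  using AE_path_nonneg[OF assms(1), of s] AE_A_nonneg[OF assms, of t] by eventually_elim simp

lemma integrable_path_powr: "j \<in> {1..d} \<Longrightarrow> integrable M (\<lambda>w. piM d A s w i j powr a)"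
proof (induction s arbitrary: j)
  case 0
  then show ?case by simp
next
  case (Suc s)
  define P where "P = {k\<in>{1..d}. trle M d A i k \<and> prec M d A k j}"
  have "integrable M (\<lambda>w. (\<Sum>k\<in>P. piM d A s w i k * A (- int s) w k j) powr a)"
  proof (rule integrable_powr_sum[OF exponent_pos])
    fix k assume "k \<in> P"
    then have k: "k \<in> {1..d}" "trle M d A i k" unfolding P_def by auto
    show "(\<lambda>w. piM d A s w i k * A (- int s) w k j) \<in> borel_measurable M"
      by (rule measurable_path_times_A[OF k(1) Suc.prems])
    show "AE w in M. 0 \<le> piM d A s w i k * A (- int s) w k j"
      by (rule AE_path_times_A_nonneg[OF k(1) Suc.prems])
    show "integrable M (\<lambda>w. (piM d A s w i k * A (- int s) w k j) powr a)"
      using integral_path_times_A_powr(1)[OF k(2) Suc.prems Suc.IH[OF k(1)]] .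
  qed (simp add: P_def)
  moreover have "(\<lambda>w. piM d A (Suc s) w i j powr a) \<in> borel_measurable M"
    using measurable_path[OF Suc.prems] by measurable
  ultimately show ?case
    using AE_path_Suc[OF Suc.prems, of s] unfolding P_def[symmetric]
    by (subst integrable_cong_AE) auto
qed

lemma moment_norm_path_times_A:
  assumes "trle M d A i k" "j \<in> {1..d}"
  shows "moment_norm M a (\<lambda>w. piM d A s w i k * A (- int s) w k j) = path_norm k s * entry_norm k j"
  using integral_path_times_A_powr(2)[OF assms integrable_path_powr] trle_in_range[OF assms(1) i_in_range]
  by (simp add: moment_norm_def powr_mult)

lemma path_norm_Suc_le:
  assumes "j \<in> {1..d}"
  shows "path_norm j (Suc s)
    \<le> (\<Sum>k\<in>{k\<in>{1..d}. trle M d A i k \<and> prec M d A k j}. path_norm k s * entry_norm k j)"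
proof -
  define P where "P = {k\<in>{1..d}. trle M d A i k \<and> prec M d A k j}"
  define X where "X k w = piM d A s w i k * A (- int s) w k j" for k w
  have X: "X k \<in> borel_measurable M" "AE w in M. 0 \<le> X k w" "integrable M (\<lambda>w. X k w powr a)"
    if "k \<in> P" for k
    using that assms measurable_path_times_A AE_path_times_A_nonneg
      integral_path_times_A_powr(1)[OF _ assms integrable_path_powr]
    unfolding P_def X_def by auto
  have "path_norm j (Suc s) = moment_norm M a (\<lambda>w. \<Sum>k\<in>P. X k w)"
  proof -
    have "(\<integral>w. piM d A (Suc s) w i j powr a \<partial>M) = (\<integral>w. (\<Sum>k\<in>P. X k w) powr a \<partial>M)"
      using AE_path_Suc[OF assms, of s] measurable_path[OF assms, of "Suc s"] X(1)
      unfolding P_def[symmetric] X_def[symmetric]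
      by (intro integral_cong_AE) (auto simp: P_def)
    then show ?thesis unfolding moment_norm_def by simp
  qed
  also have "\<dots> \<le> (\<Sum>k\<in>P. moment_norm M a (X k))"
    using X by (intro moment_norm_sum_le exponent_pos) (auto simp: P_def)
  also have "\<dots> = (\<Sum>k\<in>P. path_norm k s * entry_norm k j)"
    using moment_norm_path_times_A assms unfolding P_def X_def by (intro sum.cong) auto
  finally show ?thesis unfolding P_def .
qed

lemma integral_path_Suc_ge:
  assumes "trle M d A i k" "j \<in> {1..d}"
  shows "(\<integral>w. piM d A s w i k powr a \<partial>M) * (\<integral>w. A 0 w k j powr a \<partial>M)
    \<le> (\<integral>w. piM d A (Suc s) w i j powr a \<partial>M)"
proof -
  have k: "k \<in> {1..d}" using trle_in_range[OF assms(1) i_in_range] .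
  have "AE w in M. (piM d A s w i k * A (- int s) w k j) powr a \<le> piM d A (Suc s) w i j powr a"
    using AE_support AE_path_times_A_nonneg[OF k assms(2), of s "- int s"]
  proof eventually_elim
    case (elim w)
    then show ?case using piM_Suc_ge[where A=A and w=w and i=i and s=s] k assms(2) exponent_pos
      by (intro powr_mono2) auto
  qed
  note product = integral_path_times_A_powr[OF assms integrable_path_powr[OF k]]
  have "(\<integral>w. piM d A s w i k powr a \<partial>M) * (\<integral>w. A 0 w k j powr a \<partial>M)
      = (\<integral>w. (piM d A s w i k * A (- int s) w k j) powr a \<partial>M)"
    by (rule product(2)[symmetric])
  also have "\<dots> \<le> (\<integral>w. piM d A (Suc s) w i j powr a \<partial>M)"
    by (rule integral_mono_AE[OF product(1) integrable_path_powr[OF assms(2)]]) fact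
  finally show ?thesis .
qed

lemma integral_path_pos:
  assumes "trle M d A i j"
  shows "\<exists>s. 0 < (\<integral>w. piM d A s w i j powr a \<partial>M)"
  using assms unfolding trle_def
proof (induction rule: rtranclp_induct)
  case base
  have "(\<integral>w. piM d A 0 w i i powr a \<partial>M) = 1" by (simp add: prob_space)
  then show ?case by (intro exI[of _ 0]) simp
next
  case (step k j)
  then obtain s where s: "0 < (\<integral>w. piM d A s w i k powr a \<partial>M)" by blast
  have kj: "k \<in> {1..d}" "j \<in> {1..d}" using prec_in_range[OF step(2)] by auto
  have "0 < (\<integral>w. A 0 w k j powr a \<partial>M)"
    using step(1,2) kj
    by (intro integral_powr_pos measurable_A integrable_A_powr) (auto simp: trle_def prec_def)
  with s have "0 < (\<integral>w. piM d A s w i k powr a \<partial>M) * (\<integral>w. A 0 w k j powr a \<partial>M)" by simp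
  also have "\<dots> \<le> (\<integral>w. piM d A (Suc s) w i j powr a \<partial>M)"
    by (rule integral_path_Suc_ge) (use step(1) kj in \<open>auto simp: trle_def\<close>)
  finally show ?case by blast
qed

end

locale dominant_index = moment_model +
  fixes j0 :: nat
  assumes j0_in_range: "j0 \<in> {1..d}"
    and trle_j0: "trle M d A i j0"
    and exponent_eq: "a = \<alpha> j0"
begin

definition below_j0 :: "nat set" where
  "below_j0 = {k \<in> {1..d}. trle M d A i k \<and> trle M d A k j0 \<and> k \<noteq> j0}"

lemma entry_norm_below_j0_less_1:
  assumes "k \<in> below_j0"
  shows "entry_norm k k < 1"
proof -
  have k: "k \<in> {1..d}" "trle M d A i k" "k \<noteq> j0" using assms unfolding below_j0_def by auto
  have "\<alpha> k \<noteq> \<alpha> j0" using inj_on_alpha k j0_in_range by (metis inj_on_contraD)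
  then have "a < \<alpha> k" using exponent_le[OF k(2)] exponent_eq by simp
  then have "(\<integral>w. A 0 w k k powr a \<partial>M) < 1"
    using integral_powr_less_one[OF measurable_A[OF k(1) k(1)] AE_A_nonneg[OF k(1) k(1)]
        condition_T_diagonal(2,3)[OF k(1)] exponent_pos _
        not_AE_eq_1_if_non_arithmetic[OF measurable_A[OF k(1) k(1)] condition_T_non_arithmetic[OF k(1)]]]
    by simp
  then have "entry_norm k k < 1 powr (1 / max 1 a)"
    unfolding moment_norm_def using exponent_pos by (intro powr_less_mono2) auto
  then show ?thesis by simp
qed

lemma entry_norm_j0: "entry_norm j0 j0 = 1"
  using condition_T_diagonal(3)[OF j0_in_range] unfolding exponent_eq moment_norm_def by simp

text \<open>By (T-3), every \<open>k \<noteq> j\<close> with \<open>i \<unlhd> k \<preccurlyeq> j\<close> lies in \<open>below_j0\<close> and below \<open>j\<close>.\<close>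
lemma path_norm_Suc_le_triangular:
  assumes "j \<in> below_j0 \<or> j = j0"
  shows "path_norm j (Suc s)
    \<le> entry_norm j j * path_norm j s + (\<Sum>k\<in>{k\<in>below_j0. k < j}. entry_norm k j * path_norm k s)"
proof -
  define K where "K = {k\<in>below_j0. k < j}"
  have j: "j \<in> {1..d}" "trle M d A j j0"
    using assms j0_in_range trle_j0 unfolding below_j0_def trle_def by auto
  have "finite K" unfolding K_def below_j0_def by simp
  have preds: "{k\<in>{1..d}. trle M d A i k \<and> prec M d A k j} \<subseteq> insert j K"
  proof
    fix k assume k: "k \<in> {k\<in>{1..d}. trle M d A i k \<and> prec M d A k j}"
    show "k \<in> insert j K"
    proof (cases "k = j")
      case False
      then have "k < j" using prec_imp_le k by force
      moreover have "trle M d A k j0" using k j(2) unfolding trle_def by auto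
      moreover have "k \<noteq> j0" using \<open>k < j\<close> trle_imp_le[OF j(2)] by simp
      ultimately show ?thesis using k unfolding K_def below_j0_def by auto
    qed simp
  qed
  have "path_norm j (Suc s) \<le> (\<Sum>k\<in>{k\<in>{1..d}. trle M d A i k \<and> prec M d A k j}. path_norm k s * entry_norm k j)"
    by (rule path_norm_Suc_le[OF j(1)])
  also have "\<dots> \<le> (\<Sum>k\<in>insert j K. path_norm k s * entry_norm k j)"
    using \<open>finite K\<close> preds by (intro sum_mono2) (auto simp: moment_norm_nonneg)
  also have "\<dots> = entry_norm j j * path_norm j s + (\<Sum>k\<in>K. entry_norm k j * path_norm k s)"
    using \<open>finite K\<close> by (simp add: K_def mult.commute)
  finally show ?thesis unfolding K_def .
qed

lemma path_norm_below_j0_geometric: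
  "\<exists>C r. 0 \<le> C \<and> 0 \<le> r \<and> r < 1 \<and> (\<forall>k\<in>below_j0. \<forall>s. path_norm k s \<le> C * r ^ s)"
proof (rule triangular_recursion_geometric_bound[where \<gamma>=entry_norm])
  show "finite below_j0" unfolding below_j0_def by simp
  show "path_norm j (Suc s)
      \<le> entry_norm j j * path_norm j s + (\<Sum>k\<in>{k\<in>below_j0. k < j}. entry_norm k j * path_norm k s)"
    if "j \<in> below_j0" for j s
    using that by (intro path_norm_Suc_le_triangular) simp
qed (simp_all add: moment_norm_nonneg entry_norm_below_j0_less_1)

lemma path_norm_j0_bounded: "\<exists>K. \<forall>s. path_norm j0 s \<le> K"
proof -
  obtain C r where Cr: "0 \<le> C" "0 \<le> r" "r < 1" "\<forall>k\<in>below_j0. \<forall>s. path_norm k s \<le> C * r ^ s"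
    using path_norm_below_j0_geometric by blast
  define K where "K = {k\<in>below_j0. k < j0}"
  define D where "D = (\<Sum>k\<in>K. entry_norm k j0) * C"
  have "path_norm j0 (Suc s) \<le> path_norm j0 s + D * r ^ s" for s
  proof -
    have "(\<Sum>k\<in>K. entry_norm k j0 * path_norm k s) \<le> (\<Sum>k\<in>K. entry_norm k j0 * (C * r ^ s))"
      using Cr(4) unfolding K_def by (intro sum_mono mult_left_mono) (auto simp: moment_norm_nonneg)
    also have "\<dots> = D * r ^ s" unfolding D_def by (simp add: sum_distrib_left mult_ac)
    finally show ?thesis using path_norm_Suc_le_triangular[of j0 s] entry_norm_j0 unfolding K_def by simp
  qed
  moreover have "0 \<le> D" unfolding D_def using Cr by (intro mult_nonneg_nonneg sum_nonneg moment_norm_nonneg)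
  ultimately show ?thesis using bounded_of_geometric_increments[of "path_norm j0" D r] Cr by blast
qed

lemma moment_j0_converges:
  "\<exists>u. (\<lambda>s. \<integral>w. piM d A s w i j0 powr a \<partial>M) \<longlonglongrightarrow> u \<and> 0 < u"
proof -
  define m where "m s = (\<integral>w. piM d A s w i j0 powr a \<partial>M)" for s
  have "incseq m"
  proof (rule incseq_SucI)
    fix s show "m s \<le> m (Suc s)"
      using integral_path_Suc_ge[OF trle_j0 j0_in_range, of s] condition_T_diagonal(3)[OF j0_in_range]
      unfolding m_def exponent_eq by simp
  qed
  obtain K where K: "\<forall>s. path_norm j0 s \<le> K" using path_norm_j0_bounded by blast
  have "m s \<le> K powr max 1 a" for s
    unfolding m_def moment_norm_powr[symmetric] using K by (intro powr_mono2) (auto simp: moment_norm_nonneg)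
  then have bdd: "bdd_above (range m)" by (rule bdd_aboveI2)
  have lim: "m \<longlonglongrightarrow> (SUP s. m s)" by (rule LIMSEQ_incseq_SUP[OF bdd \<open>incseq m\<close>])
  obtain s where "0 < m s" using integral_path_pos[OF trle_j0] unfolding m_def by blast
  moreover have "m s \<le> (SUP s. m s)" using bdd by (intro cSUP_upper) auto
  ultimately have "0 < (SUP s. m s)" by simp
  with lim show ?thesis unfolding m_def by blast
qed

lemma moment_below_j0_tendsto_0:
  assumes "j \<in> below_j0"
  shows "(\<lambda>s. \<integral>w. piM d A s w i j powr a \<partial>M) \<longlonglongrightarrow> 0"
proof -
  obtain C r where Cr: "0 \<le> r" "r < 1" "\<forall>s. path_norm j s \<le> C * r ^ s"
    using path_norm_below_j0_geometric assms by blast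
  have "\<forall>\<^sub>F s in sequentially. 0 \<le> path_norm j s" by (simp add: moment_norm_nonneg)
  moreover have "\<forall>\<^sub>F s in sequentially. path_norm j s \<le> C * r ^ s" using Cr(3) by simp
  moreover have "(\<lambda>s. C * r ^ s) \<longlonglongrightarrow> 0"
    using Cr by (intro tendsto_mult_right_zero LIMSEQ_power_zero) auto
  ultimately have "(\<lambda>s. path_norm j s) \<longlonglongrightarrow> 0" by (rule tendsto_sandwich[OF _ _ tendsto_const])
  then have "(\<lambda>s. path_norm j s powr max 1 a) \<longlonglongrightarrow> 0"
    by (rule tendsto_zero_powrI[OF _ tendsto_const]) (simp_all add: moment_norm_nonneg)
  then show ?thesis unfolding moment_norm_powr .
qed

end

theorem lemma5p8:
  fixes M :: "'a measure" and d :: nat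
    and A :: "int \<Rightarrow> 'a \<Rightarrow> nat \<Rightarrow> nat \<Rightarrow> real" and B :: "int \<Rightarrow> 'a \<Rightarrow> nat \<Rightarrow> real"
    and \<alpha> :: "nat \<Rightarrow> real" and i j0 :: nat
  assumes "prob_space M"
    and "iid_AB M d A B"
    and "condition_T M d A B \<alpha>"
    and "i \<in> {1..d}" and "j0 \<in> {1..d}"
    and "trlt M d A i j0"
    and "\<alpha> i > alpha_tilde M d A \<alpha> i"
    and "alpha_tilde M d A \<alpha> i = \<alpha> j0"
  shows "\<exists>u. ((\<lambda>s. integral\<^sup>L M (\<lambda>w. piM d A s w i j0 powr \<alpha> j0)) \<longlonglongrightarrow> u) \<and> 0 < u \<and>
           (\<forall>j. trle M d A i j \<and> trlt M d A j j0 \<longrightarrow>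
              (\<exists>s_hat::nat. \<forall>s > s_hat. integral\<^sup>L M (\<lambda>w. piM d A s w i j powr \<alpha> j0) < u))"
proof -
  interpret iid_matrix_model M d A B \<alpha>
    using assms(1-3) by (intro iid_matrix_model.intro iid_matrix_model_axioms.intro)
  have minimal: "\<alpha> j0 \<le> \<alpha> k" if "trle M d A i k" for k
    using that trle_in_range[OF that assms(4)] assms(8)[symmetric] unfolding alpha_tilde_def
    by (auto intro: Min_le)
  interpret dominant_index M d A B \<alpha> i "\<alpha> j0" j0
    using assms(4-6) minimal condition_T_diagonal(1) unfolding trlt_def
    by unfold_locales auto
  obtain u where u: "(\<lambda>s. \<integral>w. piM d A s w i j0 powr \<alpha> j0 \<partial>M) \<longlonglongrightarrow> u" "0 < u"
    using moment_j0_converges by blast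
  have "\<exists>s_hat::nat. \<forall>s > s_hat. (\<integral>w. piM d A s w i j powr \<alpha> j0 \<partial>M) < u"
    if "trle M d A i j" "trlt M d A j j0" for j
  proof -
    have "j \<in> below_j0"
      using that trle_in_range[OF that(1) assms(4)] unfolding below_j0_def trlt_def by simp
    from order_tendstoD(2)[OF moment_below_j0_tendsto_0[OF this] u(2)]
    obtain N where "\<forall>s\<ge>N. (\<integral>w. piM d A s w i j powr \<alpha> j0 \<partial>M) < u"
      unfolding eventually_sequentially by blast
    then show ?thesis by (intro exI[of _ N]) simp
  qed
  with u show ?thesis by blast
qed

end
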